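(* Let $(X,d_X)$ be a proper, doubling metric space and $p\in X$. Assume there is an open neighborhood $V$ of $p$ such that $X$ is uniformly comparable $\eta$-self-quasisymmetric at the points of a dense subset of $V$. Then $X$ admits an $\eta'$-quasisymmetric embedding into every weak tangent in $WT_p(X)$, where $\eta'(t)=1/\eta^{-1}(1/t)$.
   Context: $\eta$ is a homeomorphism of $[0,\infty)$; a homeomorphism $f$ (onto its image) is $\eta$-quasisymmetric if $d(f(x),f(y))/d(f(x),f(z))\le\eta(d(x,y)/d(x,z))$ for $x\ne z$. $X$ is comparable $\eta$-self-quasisymmetric at $x$ if there are $r_x>0$ and $C_x>0$ such that for every $0<r<r_x$ there is a subset $U\subset B(x,r)$ with $x\in U$, $r/C_x\le\operatorname{diam}U\le C_xr$, and an $\eta$-quasisymmetric homeomorphism from $U$ onto $X$. It is uniformly comparable $\eta$-self-quasisymmetric on a set $A$ if this holds for all $x\in A$ with constants $r_x=r_0$ and $C_x=C$ independent of $x$. Proper: closed balls compact; doubling: every set of diameter $d$ covered by a bounded number of sets of diameter $\le d/2$. A weak tangent of $X$ at $p$ is a pointed Gromov–Hausdorff limit of $(X,p_n,d_X/\lambda_n)$ with $\lambda_n\to0^+$, $p_n\to p$ (pointed GH convergence $(X_n,p_n,d_n)\to(Z,z,d)$, $Z$ complete: for every $r,\varepsilon>0$, for large $n$ there is a map $g:B(p_n,r)\to Z$, $g(p_n)=z$, additive distortion $<\varepsilon$, and $B(z,r-\varepsilon)$ in the $\varepsilon$-neighborhood of $g(B(p_n,r))$); $WT_p(X)$ is the set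 of weak tangents at $p$. *)

theory Defs
  imports "HOL-Analysis.Analysis"
begin

definition distortion_fn :: "(real \<Rightarrow> real) \<Rightarrow> bool" where
  "distortion_fn eta \<longleftrightarrow> (\<exists>g. homeomorphism {0..} {0..} eta g)"

definition dual_distortion :: "(real \<Rightarrow> real) \<Rightarrow> real \<Rightarrow> real" where
  "dual_distortion eta t = 1 / inv_into {0..} eta (1 / t)"

definition quasisymmetric_on ::
  "'a set \<Rightarrow> ('a \<Rightarrow> 'a \<Rightarrow> real) \<Rightarrow> 'b set \<Rightarrow> ('b \<Rightarrow> 'b \<Rightarrow> real) \<Rightarrow>
   (real \<Rightarrow> real) \<Rightarrow> 'a set \<Rightarrow> ('a \<Rightarrow> 'b) \<Rightarrow> bool" where
  "quasisymmetric_on X1 d1 X2 d2 eta U f \<longleftrightarrow>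
     U \<subseteq> X1 \<and> f ` U \<subseteq> X2 \<and>
     homeomorphic_map (subtopology (Metric_space.mtopology X1 d1) U)
                      (subtopology (Metric_space.mtopology X2 d2) (f ` U)) f \<and>
     (\<forall>x\<in>U. \<forall>y\<in>U. \<forall>z\<in>U. x \<noteq> z \<longrightarrow>
        d2 (f x) (f y) / d2 (f x) (f z) \<le> eta (d1 x y / d1 x z))"

definition mdiam :: "('a \<Rightarrow> 'a \<Rightarrow> real) \<Rightarrow> 'a set \<Rightarrow> real" where
  "mdiam d S = Sup {d x y | x y. x \<in> S \<and> y \<in> S}"

definition unif_comp_self_qs ::
  "'a set \<Rightarrow> ('a \<Rightarrow> 'a \<Rightarrow> real) \<Rightarrow> (real \<Rightarrow> real) \<Rightarrow> 'a set \<Rightarrow> bool" where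
  "unif_comp_self_qs X d eta A \<longleftrightarrow>
     (\<exists>r0 C. r0 > 0 \<and> C > 0 \<and>
        (\<forall>x\<in>A. \<forall>r. 0 < r \<and> r < r0 \<longrightarrow>
           (\<exists>U. U \<subseteq> Metric_space.mball X d x r \<and> x \<in> U \<and>
                r / C \<le> mdiam d U \<and> mdiam d U \<le> C * r \<and>
                (\<exists>f. quasisymmetric_on X d X d eta U f \<and> f ` U = X))))"

definition proper_mspace :: "'a set \<Rightarrow> ('a \<Rightarrow> 'a \<Rightarrow> real) \<Rightarrow> bool" where
  "proper_mspace X d \<longleftrightarrow>
     (\<forall>x r. compactin (Metric_space.mtopology X d) (Metric_space.mcball X d x r))"

definition doubling_mspace :: "'a set \<Rightarrow> ('a \<Rightarrow> 'a \<Rightarrow> real) \<Rightarrow> bool" where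
  "doubling_mspace X d \<longleftrightarrow>
     (\<exists>N::nat. \<forall>S. S \<subseteq> X \<and> S \<noteq> {} \<and> Metric_space.mbounded X d S \<longrightarrow>
        (\<exists>F. finite F \<and> card F \<le> N \<and> S \<subseteq> \<Union>F \<and>
             (\<forall>T\<in>F. T \<subseteq> X \<and> mdiam d T \<le> mdiam d S / 2)))"

definition pointed_GH_conv ::
  "'a set \<Rightarrow> ('a \<Rightarrow> 'a \<Rightarrow> real) \<Rightarrow> (nat \<Rightarrow> real) \<Rightarrow> (nat \<Rightarrow> 'a) \<Rightarrow>
   'b set \<Rightarrow> ('b \<Rightarrow> 'b \<Rightarrow> real) \<Rightarrow> 'b \<Rightarrow> bool" where
  "pointed_GH_conv X d lam p Z dZ z \<longleftrightarrow>
     (\<forall>r>0. \<forall>\<epsilon>>0. \<forall>\<^sub>F n in sequentially.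
        (let B = {a \<in> X. d (p n) a / lam n < r} in
         \<exists>g. (\<forall>a\<in>B. g a \<in> Z) \<and> g (p n) = z \<and>
             (\<forall>a\<in>B. \<forall>b\<in>B. \<bar>dZ (g a) (g b) - d a b / lam n\<bar> < \<epsilon>) \<and>
             (\<forall>w\<in>Z. dZ z w < r - \<epsilon> \<longrightarrow> (\<exists>a\<in>B. dZ w (g a) < \<epsilon>))))"

definition weak_tangent ::
  "'a set \<Rightarrow> ('a \<Rightarrow> 'a \<Rightarrow> real) \<Rightarrow> 'a \<Rightarrow> 'b set \<Rightarrow> ('b \<Rightarrow> 'b \<Rightarrow> real) \<Rightarrow> 'b \<Rightarrow> bool" where
  "weak_tangent X d p Z dZ z \<longleftrightarrow>
     Metric_space Z dZ \<and> Metric_space.mcomplete Z dZ \<and> z \<in> Z \<and>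
     (\<exists>lam q. (\<forall>n. lam n > 0) \<and> lam \<longlonglongrightarrow> 0 \<and> (\<forall>n. q n \<in> X) \<and>
        ((\<lambda>n. d (q n) p) \<longlonglongrightarrow> 0) \<and> pointed_GH_conv X d lam q Z dZ z)"

end

theory Submission
  imports Defs
begin

(* A single self-quasisymmetric piece U, contained in a small ball, is mapped onto X; hence X is
   bounded and, being proper, compact.  Let (Z, z) be the limit of (X, q n, d / lam n).  For large n
   pick x in D with d (q n) x < lam n and invert the piece at x of scale lam n: this gives an
   eta'-quasisymmetric map h n of X into the ball B (q n) (2 lam n) whose image has diameter at least
   lam n / C.  Composed with the Gromov-Hausdorff approximations, h n becomes a map psi n of X into
   the closed ball of radius 3 about z, a compact set, whose distances are within 1 / (n + 1) of
   d (h n x) (h n y) / lam n.  A pointwise cluster point phi of (psi n) inherits the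
   eta'-quasisymmetry inequality, a closed condition, together with a lower bound on its distances
   that is uniform in n and comes from the diameter of the images.  So phi is injective, the
   inequality makes it continuous, and a continuous injection of a compact space is an embedding. *)

section \<open>Distortion functions\<close>

lemma distortion_fn_homeomorphism:
  assumes "distortion_fn eta"
  shows "homeomorphism {0..} {0..} eta (inv_into {0..} eta)"
proof -
  obtain g where g: "homeomorphism {0..} {0..} eta g"
    using assms unfolding distortion_fn_def by blast
  have inj: "inj_on eta {0..}"
    using g by (metis homeomorphism_apply1 inj_on_inverseI)
  then have g_eq: "inv_into {0..} eta y = g y" if "y \<in> {0..}" for y
    using g that by (metis homeomorphism_apply2 homeomorphism_image2 imageI inv_into_f_eq)
  have "continuous_on {0..} (inv_into {0..} eta)"
    using continuous_on_cong[OF refl g_eq] homeomorphism_cont2[OF g] by (rule iffD2)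
  with g show ?thesis
    by (intro homeomorphismI) (auto simp: g_eq homeomorphism_def inv_into_f_f[OF inj])
qed

lemma distortion_fn_inv_into: "distortion_fn eta \<Longrightarrow> distortion_fn (inv_into {0..} eta)"
  using homeomorphism_symD[OF distortion_fn_homeomorphism] unfolding distortion_fn_def by blast

lemma distortion_fn_nonneg: "distortion_fn eta \<Longrightarrow> 0 \<le> t \<Longrightarrow> 0 \<le> eta t"
  unfolding distortion_fn_def homeomorphism_def by auto

lemma distortion_fn_inj_on: "distortion_fn eta \<Longrightarrow> inj_on eta {0..}"
  unfolding distortion_fn_def by (metis homeomorphism_apply1 inj_on_inverseI)

lemma distortion_fn_surj: "distortion_fn eta \<Longrightarrow> 0 \<le> s \<Longrightarrow> \<exists>t\<ge>0. eta t = s"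
  unfolding distortion_fn_def homeomorphism_def by (metis atLeast_iff imageE)

lemma distortion_fn_interval_mono:
  assumes "distortion_fn eta" "0 \<le> a" "a < x" "x < b"
  shows "(eta a < eta x \<and> eta x < eta b) \<or> (eta b < eta x \<and> eta x < eta a)"
proof -
  obtain g where "homeomorphism {0..} {0..} eta g"
    using assms(1) unfolding distortion_fn_def by blast
  then have "continuous_on {a..b} eta"
    using assms(2) by (auto intro: continuous_on_subset homeomorphism_cont1)
  moreover have "inj_on eta {a..b}"
    using distortion_fn_inj_on[OF assms(1)] by (rule inj_on_subset) (use assms(2) in auto)
  ultimately show ?thesis
    using continuous_inj_imp_mono assms(3,4) by blast
qed

lemma distortion_fn_0:
  assumes "distortion_fn eta"
  shows "eta 0 = 0"
proof (rule ccontr)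
  assume "eta 0 \<noteq> 0"
  obtain a where a: "0 \<le> a" "eta a = 0"
    using distortion_fn_surj[OF assms] by blast
  with \<open>eta 0 \<noteq> 0\<close> have "0 < a"
    by (cases "a = 0") auto
  then show False
    using distortion_fn_interval_mono[OF assms, of 0 a "2 * a"] a
      distortion_fn_nonneg[OF assms, of 0] distortion_fn_nonneg[OF assms, of "2 * a"] by auto
qed

lemma distortion_fn_strict_mono:
  assumes "distortion_fn eta" "0 \<le> s" "s < t"
  shows "eta s < eta t"
proof (cases "s = 0")
  case True
  have "eta t \<noteq> eta 0"
    using assms True inj_onD[OF distortion_fn_inj_on[OF assms(1)], of t 0] by auto
  then show ?thesis
    using True distortion_fn_0[OF assms(1)] distortion_fn_nonneg[OF assms(1), of t] assms by auto
next
  case False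
  then show ?thesis
    using distortion_fn_interval_mono[OF assms(1), of 0 s t] assms
      distortion_fn_0[OF assms(1)] distortion_fn_nonneg[OF assms(1), of s] by auto
qed

lemma distortion_fn_mono: "distortion_fn eta \<Longrightarrow> 0 \<le> s \<Longrightarrow> s \<le> t \<Longrightarrow> eta s \<le> eta t"
  using distortion_fn_strict_mono[of eta s t] by (cases "s = t") auto

lemma distortion_fn_pos: "distortion_fn eta \<Longrightarrow> 0 < t \<Longrightarrow> 0 < eta t"
  using distortion_fn_strict_mono[of eta 0 t] distortion_fn_0[of eta] by simp

lemma distortion_fn_small:
  assumes "distortion_fn eta" "0 < e"
  obtains \<delta> where "0 < \<delta>" "\<And>t. 0 \<le> t \<Longrightarrow> t < \<delta> \<Longrightarrow> eta t < e"
proof -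
  obtain \<delta> where \<delta>: "0 \<le> \<delta>" "eta \<delta> = e / 2"
    using distortion_fn_surj[OF assms(1), of "e / 2"] assms(2) by auto
  have "\<delta> \<noteq> 0"
    using \<delta> assms by (auto simp: distortion_fn_0)
  show ?thesis
  proof (rule that)
    show "0 < \<delta>"
      using \<delta>(1) \<open>\<delta> \<noteq> 0\<close> by linarith
    show "eta t < e" if "0 \<le> t" "t < \<delta>" for t
      using distortion_fn_strict_mono[OF assms(1) that] \<delta> assms(2) by linarith
  qed
qed

lemma distortion_fn_reciprocal_small:
  assumes "distortion_fn f" "0 < e"
  obtains \<delta> where "0 < \<delta>" "\<And>t. 0 \<le> t \<Longrightarrow> t < \<delta> \<Longrightarrow> 1 / f (1 / t) < e"
proof -
  obtain s where s: "0 \<le> s" "f s = 1 / e"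
    using distortion_fn_surj[OF assms(1), of "1 / e"] \<open>0 < e\<close> by auto
  have "1 / f (1 / t) < e" if "0 \<le> t" "t < 1 / (s + 1)" for t
  proof (cases "t = 0")
    case True
    then show ?thesis
      using \<open>0 < e\<close> distortion_fn_0[OF assms(1)] by simp
  next
    case False
    then have "s < 1 / t"
      using that s(1) by (simp add: field_simps)
    then have "1 / e < f (1 / t)"
      using distortion_fn_strict_mono[OF assms(1) s(1)] s(2) by metis
    moreover have "0 < 1 / e"
      using \<open>0 < e\<close> by simp
    ultimately have "0 < f (1 / t)"
      by linarith
    with \<open>1 / e < f (1 / t)\<close> \<open>0 < e\<close> show ?thesis
      by (simp add: field_simps)
  qed
  moreover have "0 < 1 / (s + 1)"
    using s(1) by simp
  ultimately show ?thesis
    using that by blast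
qed

lemma distortion_fn_continuous_on_reciprocal:
  assumes "distortion_fn f"
  shows "continuous_on {0..} (\<lambda>t. 1 / f (1 / t))"
  unfolding continuous_on_eq_continuous_within
proof
  fix t :: real
  assume "t \<in> {0..}"
  show "continuous (at t within {0..}) (\<lambda>t. 1 / f (1 / t))"
  proof (cases "t = 0")
    case False
    with \<open>t \<in> {0..}\<close> have "0 < t" by simp
    have "continuous_on {0..} f"
      using distortion_fn_homeomorphism[OF assms] by (rule homeomorphism_cont1)
    then have "isCont f (1 / t)"
      using \<open>0 < t\<close> by (intro continuous_on_interior) auto
    moreover have "isCont (\<lambda>t. 1 / t) t"
      using \<open>0 < t\<close> by (intro continuous_intros) auto
    ultimately have "isCont (\<lambda>t. f (1 / t)) t"
      using isCont_o2 by fastforce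
    moreover have "f (1 / t) \<noteq> 0"
      using distortion_fn_pos[OF assms, of "1 / t"] \<open>0 < t\<close> by simp
    ultimately have "isCont (\<lambda>t. 1 / f (1 / t)) t"
      by (rule isCont_divide[OF continuous_const])
    then show ?thesis
      by (rule continuous_at_imp_continuous_at_within)
  next
    case True
    have "\<exists>\<delta>>0. \<forall>t'\<in>{0..}. dist t' 0 < \<delta> \<longrightarrow> dist (1 / f (1 / t')) 0 < e" if "0 < e" for e
    proof -
      obtain \<delta> where "0 < \<delta>" "\<And>t. 0 \<le> t \<Longrightarrow> t < \<delta> \<Longrightarrow> 1 / f (1 / t) < e"
        using distortion_fn_reciprocal_small[OF assms \<open>0 < e\<close>] by blast
      then show ?thesis
        using distortion_fn_nonneg[OF assms] by (intro exI[of _ \<delta>]) (auto simp: dist_real_def)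
    qed
    then show ?thesis
      using True distortion_fn_0[OF assms] by (simp add: continuous_within_eps_delta)
  qed
qed

lemma distortion_fn_dual_distortion:
  assumes "distortion_fn eta"
  shows "distortion_fn (dual_distortion eta)"
proof -
  define G where "G = inv_into {0..} eta"
  have G: "distortion_fn G" "homeomorphism {0..} {0..} eta G"
    unfolding G_def using assms by (rule distortion_fn_inv_into, rule distortion_fn_homeomorphism)
  have dual_eq: "dual_distortion eta = (\<lambda>t. 1 / G (1 / t))"
    unfolding G_def dual_distortion_def ..
  \<comment> \<open>At 0 both maps take the value 0 only because of the convention 1 / 0 = 0.\<close>
  have "homeomorphism {0..} {0..} (\<lambda>t. 1 / G (1 / t)) (\<lambda>s. 1 / eta (1 / s))"
  proof (rule homeomorphismI)
    show "continuous_on {0..} (\<lambda>t. 1 / G (1 / t))"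
      using G(1) by (rule distortion_fn_continuous_on_reciprocal)
    show "continuous_on {0..} (\<lambda>s. 1 / eta (1 / s))"
      using assms by (rule distortion_fn_continuous_on_reciprocal)
    show "(\<lambda>t. 1 / G (1 / t)) ` {0..} \<subseteq> {0..}"
      by (auto intro!: distortion_fn_nonneg[OF G(1)])
    show "(\<lambda>s. 1 / eta (1 / s)) ` {0..} \<subseteq> {0..}"
      by (auto intro!: distortion_fn_nonneg[OF assms])
    show "1 / eta (1 / (1 / G (1 / t))) = t" if "t \<in> {0..}" for t
    proof -
      have "eta (G (1 / t)) = 1 / t"
        using homeomorphism_apply2[OF G(2)] that by simp
      then show ?thesis
        by simp
    qed
    show "1 / G (1 / (1 / eta (1 / s))) = s" if "s \<in> {0..}" for s
    proof -
      have "G (eta (1 / s)) = 1 / s"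
        using homeomorphism_apply1[OF G(2)] that by simp
      then show ?thesis
        by simp
    qed
  qed
  then show ?thesis
    unfolding distortion_fn_def dual_eq by blast
qed

lemma dual_distortion_inverse_le:
  assumes "distortion_fn eta" "0 < s" "0 < t" "s \<le> eta t"
  shows "1 / t \<le> dual_distortion eta (1 / s)"
proof -
  define G where "G = inv_into {0..} eta"
  have G: "distortion_fn G" "homeomorphism {0..} {0..} eta G"
    unfolding G_def using assms(1) by (rule distortion_fn_inv_into, rule distortion_fn_homeomorphism)
  have "G s \<le> G (eta t)"
    using distortion_fn_mono[OF G(1)] assms(2,4) by simp
  also have "\<dots> = t"
    using homeomorphism_apply1[OF G(2)] assms(3) by simp
  finally show ?thesis
    using distortion_fn_pos[OF G(1) assms(2)] unfolding dual_distortion_def G_def [symmetric]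
    by (simp add: frac_le)
qed

section \<open>Quasisymmetric maps\<close>

lemma quasisymmetric_on_inj_on:
  assumes "Metric_space X1 d1" "quasisymmetric_on X1 d1 X2 d2 eta U f"
  shows "inj_on f U"
proof -
  have "U \<subseteq> X1"
    and "homeomorphic_map (subtopology (Metric_space.mtopology X1 d1) U)
           (subtopology (Metric_space.mtopology X2 d2) (f ` U)) f"
    using assms(2) unfolding quasisymmetric_on_def by auto
  then show ?thesis
    using homeomorphic_imp_injective_map Metric_space.topspace_mtopology[OF assms(1)]
    by (metis inf.absorb_iff2 topspace_subtopology)
qed

lemma quasisymmetric_on_le_mult:
  assumes "Metric_space X1 d1" "Metric_space X2 d2" "quasisymmetric_on X1 d1 X2 d2 eta U f"
    and "x \<in> U" "y \<in> U" "w \<in> U" "x \<noteq> w"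
  shows "d2 (f x) (f y) \<le> eta (d1 x y / d1 x w) * d2 (f x) (f w)"
proof -
  have "f x \<noteq> f w"
    using quasisymmetric_on_inj_on[OF assms(1,3)] assms(4,6,7) by (auto dest: inj_onD)
  moreover have "f x \<in> X2" "f w \<in> X2"
    using assms(3,4,6) unfolding quasisymmetric_on_def by auto
  ultimately have "0 < d2 (f x) (f w)"
    using Metric_space.mdist_pos_eq[OF assms(2)] by simp
  moreover have "d2 (f x) (f y) / d2 (f x) (f w) \<le> eta (d1 x y / d1 x w)"
    using assms(3-7) unfolding quasisymmetric_on_def by blast
  ultimately show ?thesis
    by (simp add: divide_le_eq)
qed

lemma homeomorphic_map_inv_into:
  assumes "homeomorphic_map X Y f"
  shows "homeomorphic_map Y X (inv_into (topspace X) f)"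
proof -
  obtain g where "homeomorphic_maps X Y f g"
    using assms homeomorphic_map_maps by blast
  then have g: "homeomorphic_maps Y X g f"
    by (rule homeomorphic_maps_sym[THEN iffD1])
  have "g y = inv_into (topspace X) f y" if "y \<in> topspace Y" for y
  proof -
    have "y \<in> f ` topspace X"
      using that homeomorphic_imp_surjective_map[OF assms] by simp
    then obtain x where x: "x \<in> topspace X" "y = f x"
      by blast
    then have "g (f x) = x"
      using g unfolding homeomorphic_maps_def by blast
    with x show ?thesis
      using inv_into_f_f[OF homeomorphic_imp_injective_map[OF assms]] by simp
  qed
  then show ?thesis
    by (rule homeomorphic_map_eq[OF homeomorphic_maps_imp_map[OF g]])
qed

lemma quasisymmetric_on_dual_le:
  assumes "Metric_space X1 d1" "Metric_space X2 d2" "distortion_fn eta"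
    and f: "quasisymmetric_on X1 d1 X2 d2 eta U f"
    and xyw: "x \<in> U" "y \<in> U" "w \<in> U" "x \<noteq> w"
  shows "d1 x y / d1 x w \<le> dual_distortion eta (d2 (f x) (f y) / d2 (f x) (f w))"
proof -
  interpret M1: Metric_space X1 d1 by fact
  interpret M2: Metric_space X2 d2 by fact
  have UX: "U \<subseteq> X1" "f ` U \<subseteq> X2"
    using f unfolding quasisymmetric_on_def by auto
  have inj: "inj_on f U"
    using assms(1) f by (rule quasisymmetric_on_inj_on)
  show ?thesis
  proof (cases "x = y")
    case True
    have "y \<in> X1" "f y \<in> X2"
      using UX xyw(2) by auto
    with True show ?thesis
      using distortion_fn_nonneg[OF distortion_fn_dual_distortion[OF assms(3)], of 0] by simp
  next
    case False
    have le: "d2 (f x) (f w) / d2 (f x) (f y) \<le> eta (d1 x w / d1 x y)"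
      using f xyw False unfolding quasisymmetric_on_def by blast
    have "f x \<noteq> f y" "f x \<noteq> f w"
      using inj xyw False by (auto dest: inj_onD)
    moreover have "x \<in> X1" "y \<in> X1" "w \<in> X1" "f x \<in> X2" "f y \<in> X2" "f w \<in> X2"
      using UX xyw by auto
    ultimately have "0 < d2 (f x) (f w) / d2 (f x) (f y)" "0 < d1 x w / d1 x y"
      using xyw(4) False by simp_all
    from dual_distortion_inverse_le[OF assms(3) this le] show ?thesis
      by simp
  qed
qed

lemma quasisymmetric_on_inv_into:
  assumes "Metric_space X1 d1" "Metric_space X2 d2" "distortion_fn eta"
    and f: "quasisymmetric_on X1 d1 X2 d2 eta U f"
  shows "quasisymmetric_on X2 d2 X1 d1 (dual_distortion eta) (f ` U) (inv_into U f)"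
proof -
  interpret M1: Metric_space X1 d1 by fact
  interpret M2: Metric_space X2 d2 by fact
  have UX: "U \<subseteq> X1" "f ` U \<subseteq> X2"
    and hom: "homeomorphic_map (subtopology M1.mtopology U) (subtopology M2.mtopology (f ` U)) f"
    using f unfolding quasisymmetric_on_def by auto
  have inj: "inj_on f U"
    using assms(1) f by (rule quasisymmetric_on_inj_on)
  have "topspace (subtopology M1.mtopology U) = U"
    using UX by auto
  note hom_inv = homeomorphic_map_inv_into[OF hom, unfolded this]
  have ineq: "d1 (inv_into U f a) (inv_into U f b) / d1 (inv_into U f a) (inv_into U f c)
      \<le> dual_distortion eta (d2 a b / d2 a c)"
    if abc: "a \<in> f ` U" "b \<in> f ` U" "c \<in> f ` U" "a \<noteq> c" for a b c
  proof -
    obtain x y w where xyw: "x \<in> U" "y \<in> U" "w \<in> U" and "a = f x" "b = f y" "c = f w"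
      using abc(1-3) by blast
    moreover have "x \<noteq> w"
      using abc(4) \<open>a = f x\<close> \<open>c = f w\<close> by blast
    ultimately show ?thesis
      using quasisymmetric_on_dual_le[OF assms(1-3) f xyw \<open>x \<noteq> w\<close>] inv_into_f_f[OF inj] by simp
  qed
  show ?thesis
    unfolding quasisymmetric_on_def inv_into_image_cancel[OF inj order_refl]
    using UX hom_inv ineq by simp
qed

lemma quasisymmetric_on_mbounded_image:
  assumes "Metric_space X1 d1" "Metric_space X2 d2" "distortion_fn eta"
    and f: "quasisymmetric_on X1 d1 X2 d2 eta U f" and "Metric_space.mbounded X1 d1 U"
  shows "Metric_space.mbounded X2 d2 (f ` U)"
proof -
  interpret M1: Metric_space X1 d1 by fact
  interpret M2: Metric_space X2 d2 by fact
  have fU: "f ` U \<subseteq> X2"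
    using f unfolding quasisymmetric_on_def by blast
  show ?thesis
  proof (cases "\<exists>u\<in>U. \<exists>v\<in>U. u \<noteq> v")
    case True
    then obtain u v where uv: "u \<in> U" "v \<in> U" "u \<noteq> v"
      by blast
    have "U \<subseteq> X1" "\<exists>B. \<forall>x\<in>U. \<forall>y\<in>U. d1 x y \<le> B"
      using assms(5) unfolding M1.mbounded_alt by auto
    then obtain B where B: "\<And>x y. x \<in> U \<Longrightarrow> y \<in> U \<Longrightarrow> d1 x y \<le> B"
      by blast
    have "d2 (f u) (f x) \<le> eta (B / d1 u v) * d2 (f u) (f v)" if "x \<in> U" for x
    proof -
      have "0 < d1 u v"
        using uv \<open>U \<subseteq> X1\<close> by (meson M1.mdist_pos_less subsetD)
      then have "d1 u x / d1 u v \<le> B / d1 u v"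
        using B[OF uv(1) that] by (simp add: divide_right_mono)
      then have "eta (d1 u x / d1 u v) \<le> eta (B / d1 u v)"
        using \<open>0 < d1 u v\<close> \<open>U \<subseteq> X1\<close> uv(1) that
        by (intro distortion_fn_mono[OF assms(3)]) auto
      then show ?thesis
        using quasisymmetric_on_le_mult[OF assms(1,2) f uv(1) that uv(2,3)]
          M2.nonneg[of "f u" "f v"] by (meson mult_right_mono order_trans)
    qed
    then show ?thesis
      using fU uv(1) unfolding M2.mbounded by blast
  next
    case False
    then have single: "f ` U \<subseteq> {f u}" if "u \<in> U" for u
      using that by auto
    show ?thesis
    proof (cases "U = {}")
      case False
      then obtain u where "u \<in> U"
        by blast
      then have "M2.mbounded {f u}"
        using fU by (auto simp: M2.mbounded_insert)
      with single[OF \<open>u \<in> U\<close>] show ?thesis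
        using M2.mbounded_subset by blast
    qed simp
  qed
qed

lemma quasisymmetric_on_lower_bound:
  assumes "Metric_space X1 d1" "Metric_space X2 d2" "distortion_fn eta"
    and f: "quasisymmetric_on X1 d1 X2 d2 eta U f"
    and diam: "\<And>a b. a \<in> U \<Longrightarrow> b \<in> U \<Longrightarrow> d1 a b \<le> D"
    and "u \<in> U" "v \<in> U" "x \<in> U" "w \<in> U" "x \<noteq> w"
  shows "d2 (f u) (f v) / 2 \<le> eta (D / d1 x w) * d2 (f x) (f w)"
proof -
  interpret M1: Metric_space X1 d1 by fact
  interpret M2: Metric_space X2 d2 by fact
  have UX: "U \<subseteq> X1" "f ` U \<subseteq> X2"
    using f unfolding quasisymmetric_on_def by auto
  have "0 < d1 x w"
    using assms(8-10) UX by (meson M1.mdist_pos_less subsetD)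
  have near: "d2 (f x) (f z) \<le> eta (D / d1 x w) * d2 (f x) (f w)" if "z \<in> U" for z
  proof -
    have "d1 x z / d1 x w \<le> D / d1 x w"
      using diam[OF assms(8) that] \<open>0 < d1 x w\<close> by (simp add: divide_right_mono)
    then have "eta (d1 x z / d1 x w) \<le> eta (D / d1 x w)"
      using \<open>0 < d1 x w\<close> by (intro distortion_fn_mono[OF assms(3)]) auto
    then show ?thesis
      using quasisymmetric_on_le_mult[OF assms(1,2) f assms(8) that assms(9,10)]
        M2.nonneg[of "f x" "f w"] by (meson mult_right_mono order_trans)
  qed
  have "d2 (f u) (f v) \<le> d2 (f x) (f u) + d2 (f x) (f v)"
    using UX assms(6-8) by (intro M2.triangle'') auto
  then show ?thesis
    using near[OF assms(6)] near[OF assms(7)] by linarith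
qed

lemma quasisymmetric_ineq_imp_continuous_map:
  assumes "Metric_space X d" "Metric_space Z dZ" "distortion_fn eta"
    and into: "\<phi> ` X \<subseteq> Z"
    and qs: "\<And>x y w. x \<in> X \<Longrightarrow> y \<in> X \<Longrightarrow> w \<in> X \<Longrightarrow> x \<noteq> w \<Longrightarrow>
               dZ (\<phi> x) (\<phi> y) \<le> eta (d x y / d x w) * dZ (\<phi> x) (\<phi> w)"
  shows "continuous_map (Metric_space.mtopology X d) (Metric_space.mtopology Z dZ) \<phi>"
proof -
  interpret X: Metric_space X d by fact
  interpret Z: Metric_space Z dZ by fact
  have "\<exists>\<delta>>0. \<forall>x. x \<in> X \<and> d a x < \<delta> \<longrightarrow> dZ (\<phi> a) (\<phi> x) < e"
    if "a \<in> X" "0 < e" for a e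
  proof (cases "\<exists>w\<in>X. w \<noteq> a")
    case True
    then obtain w where w: "w \<in> X" "w \<noteq> a"
      by blast
    let ?K = "dZ (\<phi> a) (\<phi> w) + 1"
    have "0 < d a w" "0 < ?K"
      using w \<open>a \<in> X\<close> by (auto intro: add_nonneg_pos)
    obtain \<delta> where \<delta>: "0 < \<delta>" "\<And>t. 0 \<le> t \<Longrightarrow> t < \<delta> \<Longrightarrow> eta t < e / ?K"
      using distortion_fn_small[OF assms(3)] \<open>0 < e\<close> \<open>0 < ?K\<close> by (metis divide_pos_pos)
    have "dZ (\<phi> a) (\<phi> x) < e" if "x \<in> X" "d a x < \<delta> * d a w" for x
    proof -
      have "eta (d a x / d a w) < e / ?K"
        using \<delta>(2) that(2) \<open>0 < d a w\<close> by (simp add: divide_less_eq)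
      then have "eta (d a x / d a w) * ?K < e"
        using \<open>0 < ?K\<close> by (simp add: less_divide_eq)
      moreover have "0 \<le> eta (d a x / d a w)"
        using \<open>0 < d a w\<close> by (simp add: distortion_fn_nonneg[OF assms(3)])
      then have "eta (d a x / d a w) * dZ (\<phi> a) (\<phi> w) \<le> eta (d a x / d a w) * ?K"
        by (simp add: mult_left_mono)
      ultimately show ?thesis
        using qs[OF \<open>a \<in> X\<close> that(1) w(1)] w(2) by force
    qed
    then show ?thesis
      using \<delta>(1) \<open>0 < d a w\<close> by (intro exI[of _ "\<delta> * d a w"]) auto
  next
    case False
    have "\<phi> a \<in> Z"
      using into \<open>a \<in> X\<close> by auto
    with False show ?thesis
      using \<open>0 < e\<close> by (intro exI[of _ 1]) auto
  qed
  then show ?thesis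
    using into unfolding X.metric_continuous_map[OF assms(2)] by blast
qed

lemma compact_quasisymmetric_onI:
  assumes "Metric_space X d" "Metric_space Z dZ" "distortion_fn eta"
    and compact: "compact_space (Metric_space.mtopology X d)"
    and into: "\<phi> ` X \<subseteq> Z"
    and inj: "\<And>x w. x \<in> X \<Longrightarrow> w \<in> X \<Longrightarrow> x \<noteq> w \<Longrightarrow> \<phi> x \<noteq> \<phi> w"
    and qs: "\<And>x y w. x \<in> X \<Longrightarrow> y \<in> X \<Longrightarrow> w \<in> X \<Longrightarrow> x \<noteq> w \<Longrightarrow>
               dZ (\<phi> x) (\<phi> y) \<le> eta (d x y / d x w) * dZ (\<phi> x) (\<phi> w)"
  shows "quasisymmetric_on X d Z dZ eta X \<phi>"
proof -
  interpret X: Metric_space X d by fact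
  interpret Z: Metric_space Z dZ by fact
  have "continuous_map X.mtopology (subtopology Z.mtopology (\<phi> ` X)) \<phi>"
    using quasisymmetric_ineq_imp_continuous_map[OF assms(1-3) into qs]
    by (simp add: continuous_map_in_subtopology)
  then have "homeomorphic_map X.mtopology (subtopology Z.mtopology (\<phi> ` X)) \<phi>"
  proof (rule continuous_imp_homeomorphic_map[OF _ compact])
    show "Hausdorff_space (subtopology Z.mtopology (\<phi> ` X))"
      by (rule Hausdorff_space_subtopology[OF Z.Hausdorff_space_mtopology])
    show "\<phi> ` topspace X.mtopology = topspace (subtopology Z.mtopology (\<phi> ` X))"
      using into by auto
    show "inj_on \<phi> (topspace X.mtopology)"
      using inj by (auto simp: inj_on_def)
  qed
  moreover have "subtopology X.mtopology X = X.mtopology"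
    by (metis X.topspace_mtopology subtopology_topspace)
  moreover have "dZ (\<phi> x) (\<phi> y) / dZ (\<phi> x) (\<phi> w) \<le> eta (d x y / d x w)"
    if "x \<in> X" "y \<in> X" "w \<in> X" "x \<noteq> w" for x y w
  proof -
    have "0 < dZ (\<phi> x) (\<phi> w)"
      using inj[OF that(1,3,4)] into that(1,3) by (meson Z.mdist_pos_less image_subset_iff)
    then show ?thesis
      using qs[OF that] by (simp add: divide_le_eq)
  qed
  ultimately show ?thesis
    using into unfolding quasisymmetric_on_def by simp
qed

section \<open>Cluster points of approximating maps\<close>

lemma closed_pair_approachable:
  fixes A B :: real
  assumes "closed S" and approx: "\<And>e. 0 < e \<Longrightarrow> \<exists>a b. (a, b) \<in> S \<and> \<bar>A - a\<bar> < e \<and> \<bar>B - b\<bar> < e"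
  shows "(A, B) \<in> S"
proof -
  have "\<exists>y\<in>S. dist y (A, B) < e" if "0 < e" for e
  proof -
    obtain a b where ab: "(a, b) \<in> S" "\<bar>A - a\<bar> < e / 2" "\<bar>B - b\<bar> < e / 2"
      using approx[of "e / 2"] \<open>0 < e\<close> by auto
    have "dist (a, b) (A, B) \<le> \<bar>a - A\<bar> + \<bar>b - B\<bar>"
      unfolding dist_Pair_Pair dist_real_def by (metis abs_abs sqrt_sum_squares_le_sum_abs)
    with ab have "dist (a, b) (A, B) < e"
      using abs_minus_commute[of a A] abs_minus_commute[of b B] by linarith
    with ab(1) show ?thesis
      by blast
  qed
  then show ?thesis
    using closed_approachable[OF assms(1)] by blast
qed

lemma approachable_ratio_bounds:
  fixes A B Q c :: real
  assumes "\<And>e. 0 < e \<Longrightarrow> \<exists>a b. a \<le> Q * b \<and> c \<le> b \<and> \<bar>A - a\<bar> < e \<and> \<bar>B - b\<bar> < e"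
  shows "A \<le> Q * B \<and> c \<le> B"
proof -
  have "(A, B) \<in> {p. fst p \<le> Q * snd p \<and> c \<le> snd p}"
  proof (rule closed_pair_approachable)
    show "closed {p. fst p \<le> Q * snd p \<and> c \<le> snd p}"
      by (intro closed_Collect_conj closed_Collect_le continuous_intros)
    show "\<exists>a b. (a, b) \<in> {p. fst p \<le> Q * snd p \<and> c \<le> snd p} \<and> \<bar>A - a\<bar> < e \<and> \<bar>B - b\<bar> < e"
      if "0 < e" for e
      using assms[OF that] by simp
  qed
  then show ?thesis
    by simp
qed

lemma (in Metric_space) mdist_diff_le:
  assumes "a \<in> M" "b \<in> M" "a' \<in> M" "b' \<in> M"
  shows "\<bar>d a b - d a' b'\<bar> \<le> d a a' + d b b'"
proof -
  have "d a b \<le> d a a' + d a' b' + d b' b" "d a' b' \<le> d a' a + d a b + d b b'"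
    using assms triangle by (smt (verit))+
  then show ?thesis
    using commute[of a a'] commute[of b b'] by linarith
qed

lemma compact_space_sequence_cluster_point:
  fixes s :: "nat \<Rightarrow> 'a"
  assumes "compact_space T" "\<And>k. s k \<in> topspace T"
  obtains \<phi> where "\<And>m. \<phi> \<in> T closure_of (s ` {m..})"
proof -
  define C where "C m = T closure_of (s ` {m..})" for m
  have "(\<Inter>m. C m) \<noteq> {}"
  proof (rule compact_space_imp_nest[OF assms(1)])
    show "closedin T (C m)" for m
      unfolding C_def by simp
    show "C m \<noteq> {}" for m
      using assms(2) closure_of_subset[of "s ` {m..}" T] unfolding C_def by blast
    show "decseq C"
      unfolding decseq_def C_def by (auto intro!: closure_of_mono image_mono)
  qed
  then obtain \<phi> where "\<And>m. \<phi> \<in> C m"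
    by blast
  then show ?thesis
    unfolding C_def by (rule that)
qed

lemma compactin_pointwise_cluster_point:
  fixes \<Psi> :: "nat \<Rightarrow> 'a \<Rightarrow> 'b"
  assumes "Metric_space Z dZ" "compactin (Metric_space.mtopology Z dZ) K"
    and into: "\<And>k x. x \<in> X \<Longrightarrow> \<Psi> k x \<in> K"
  obtains \<phi> where "\<And>x. x \<in> X \<Longrightarrow> \<phi> x \<in> K"
    and "\<And>F m e. finite F \<Longrightarrow> F \<subseteq> X \<Longrightarrow> 0 < e \<Longrightarrow>
           \<exists>k\<ge>m. \<forall>x\<in>F. dZ (\<Psi> k x) (\<phi> x) < e"
proof -
  interpret Z: Metric_space Z dZ by fact
  define T where "T = product_topology (\<lambda>_. subtopology Z.mtopology K) X"
  define \<Psi>' where "\<Psi>' k = restrict (\<Psi> k) X" for k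
  have "K \<subseteq> Z"
    using compactin_subset_topspace[OF assms(2)] by simp
  then have topspace_T: "topspace T = (\<Pi>\<^sub>E x\<in>X. K)"
    unfolding T_def by auto
  have \<Psi>'_T: "\<Psi>' k \<in> topspace T" for k
    using into unfolding topspace_T \<Psi>'_def by auto
  have "compact_space T"
    unfolding T_def compact_space_product_topology
    using compact_space_subtopology[OF assms(2)] by blast
  obtain \<phi> where \<phi>: "\<And>m. \<phi> \<in> T closure_of (\<Psi>' ` {m..})"
    by (rule compact_space_sequence_cluster_point[where s = \<Psi>', OF \<open>compact_space T\<close> \<Psi>'_T]) blast
  have "\<phi> \<in> topspace T"
    using \<phi>[of 0] by (meson closure_of_subset_topspace subsetD)
  then have \<phi>_K: "\<phi> x \<in> K" if "x \<in> X" for x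
    using that unfolding topspace_T by auto
  have close: "\<exists>k\<ge>m. \<forall>x\<in>F. dZ (\<Psi> k x) (\<phi> x) < e" if "finite F" "F \<subseteq> X" "0 < e" for F m e
  proof -
    define N where "N = (\<Inter>x\<in>F. {\<psi> \<in> topspace T. \<psi> x \<in> Z.mball (\<phi> x) e}) \<inter> topspace T"
    have "continuous_map T Z.mtopology (\<lambda>\<psi>. \<psi> x)" if "x \<in> X" for x
      unfolding T_def using continuous_map_product_projection[OF that]
      by (rule continuous_map_into_fulltopology)
    then have "openin T N"
      unfolding N_def using \<open>F \<subseteq> X\<close> \<open>finite F\<close>
      by (intro openin_INT openin_continuous_map_preimage[OF _ Z.openin_mball]) auto
    moreover have "\<phi> \<in> N"
      unfolding N_def using \<open>\<phi> \<in> topspace T\<close> \<phi>_K \<open>F \<subseteq> X\<close> \<open>K \<subseteq> Z\<close> \<open>0 < e\<close>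
      by (auto simp: subset_iff)
    ultimately obtain k where "k \<ge> m" "\<Psi>' k \<in> N"
      using \<phi>[of m] unfolding in_closure_of by blast
    then have "dZ (\<phi> x) (\<Psi> k x) < e" if "x \<in> F" for x
      using that \<open>F \<subseteq> X\<close> unfolding N_def \<Psi>'_def by (auto simp: subset_iff)
    with \<open>k \<ge> m\<close> show ?thesis
      by (auto simp: Z.commute)
  qed
  show ?thesis
    by (rule that[OF \<phi>_K close])
qed

lemma compactin_approximate_distances_limit:
  fixes \<Psi> :: "nat \<Rightarrow> 'a \<Rightarrow> 'b" and \<rho> :: "nat \<Rightarrow> 'a \<Rightarrow> 'a \<Rightarrow> real"
  assumes "Metric_space Z dZ" "compactin (Metric_space.mtopology Z dZ) K"
    and into: "\<And>k x. x \<in> X \<Longrightarrow> \<Psi> k x \<in> K"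
    and approx: "\<And>k x y. x \<in> X \<Longrightarrow> y \<in> X \<Longrightarrow> \<bar>dZ (\<Psi> k x) (\<Psi> k y) - \<rho> k x y\<bar> < 1 / (real k + 1)"
  obtains \<phi> where "\<And>x. x \<in> X \<Longrightarrow> \<phi> x \<in> K"
    and "\<And>x y w e. x \<in> X \<Longrightarrow> y \<in> X \<Longrightarrow> w \<in> X \<Longrightarrow> 0 < e \<Longrightarrow>
           \<exists>k. \<bar>dZ (\<phi> x) (\<phi> y) - \<rho> k x y\<bar> < e \<and> \<bar>dZ (\<phi> x) (\<phi> w) - \<rho> k x w\<bar> < e"
proof -
  interpret Z: Metric_space Z dZ by fact
  obtain \<phi> where \<phi>_K: "\<And>x. x \<in> X \<Longrightarrow> \<phi> x \<in> K"
    and cluster: "\<And>F m e. finite F \<Longrightarrow> F \<subseteq> X \<Longrightarrow> 0 < e \<Longrightarrow>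
                    \<exists>k\<ge>m. \<forall>x\<in>F. dZ (\<Psi> k x) (\<phi> x) < e"
    using compactin_pointwise_cluster_point[where \<Psi> = \<Psi>, OF assms(1,2) into] by blast
  have "K \<subseteq> Z"
    using compactin_subset_topspace[OF assms(2)] by simp
  have close: "\<exists>k. \<bar>dZ (\<phi> x) (\<phi> y) - \<rho> k x y\<bar> < e \<and> \<bar>dZ (\<phi> x) (\<phi> w) - \<rho> k x w\<bar> < e"
    if xyw: "x \<in> X" "y \<in> X" "w \<in> X" and "0 < e" for x y w e
  proof -
    obtain m where m: "inverse (real (Suc m)) < e / 3"
      using reals_Archimedean \<open>0 < e\<close> by (metis divide_pos_pos zero_less_numeral)
    obtain k where "k \<ge> m" and k: "\<forall>v\<in>{x, y, w}. dZ (\<Psi> k v) (\<phi> v) < e / 3"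
      using cluster[of "{x, y, w}" "e / 3" m] xyw \<open>0 < e\<close> by auto
    have "1 / (real k + 1) \<le> inverse (real (Suc m))"
      using \<open>k \<ge> m\<close> by (simp add: inverse_eq_divide frac_le)
    then have small: "1 / (real k + 1) < e / 3"
      using m by linarith
    have "\<bar>dZ (\<phi> x) (\<phi> v) - \<rho> k x v\<bar> < e" if "v \<in> {y, w}" for v
    proof -
      have "v \<in> X"
        using that xyw by auto
      then have "\<bar>dZ (\<phi> x) (\<phi> v) - dZ (\<Psi> k x) (\<Psi> k v)\<bar> \<le> dZ (\<phi> x) (\<Psi> k x) + dZ (\<phi> v) (\<Psi> k v)"
        using xyw \<phi>_K into \<open>K \<subseteq> Z\<close> by (intro Z.mdist_diff_le) auto
      moreover have "dZ (\<phi> x) (\<Psi> k x) < e / 3" "dZ (\<phi> v) (\<Psi> k v) < e / 3"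
        using k that by (auto simp: Z.commute)
      moreover have "\<bar>dZ (\<Psi> k x) (\<Psi> k v) - \<rho> k x v\<bar> < 1 / (real k + 1)"
        using approx xyw(1) \<open>v \<in> X\<close> by blast
      ultimately show ?thesis
        using small by linarith
    qed
    then show ?thesis
      by blast
  qed
  show ?thesis
    by (rule that[OF \<phi>_K close])
qed

section \<open>Pointed Gromov-Hausdorff convergence\<close>

lemma (in Metric_space) mtotally_boundedI_net:
  assumes "S \<subseteq> M"
    and net: "\<And>e. 0 < e \<Longrightarrow> \<exists>F. finite F \<and> F \<subseteq> M \<and> S \<subseteq> (\<Union>c\<in>F. mball c e)"
  shows "mtotally_bounded S"
  unfolding mtotally_bounded_def
proof (intro allI impI)
  fix e :: real
  assume "0 < e"
  then obtain F where F: "finite F" "F \<subseteq> M" "S \<subseteq> (\<Union>c\<in>F. mball c (e / 2))"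
    using net[of "e / 2"] by auto
  define F' where "F' = {c \<in> F. \<exists>w\<in>S. d c w < e / 2}"
  define pick where "pick c = (SOME w. w \<in> S \<and> d c w < e / 2)" for c
  have pick: "pick c \<in> S" "d c (pick c) < e / 2" if "c \<in> F'" for c
    using someI_ex[of "\<lambda>w. w \<in> S \<and> d c w < e / 2"] that unfolding F'_def pick_def by auto
  \<comment> \<open>the centres must lie in S: move each useful one to a point of S within e/2\<close>
  have "S \<subseteq> (\<Union>x\<in>pick ` F'. mball x e)"
  proof
    fix w
    assume "w \<in> S"
    then obtain c where c: "c \<in> F" "d c w < e / 2"
      using F(3) by auto
    with \<open>w \<in> S\<close> have "c \<in> F'"
      unfolding F'_def by auto
    have "d (pick c) w \<le> d (pick c) c + d c w"
      using pick[OF \<open>c \<in> F'\<close>] c F(2) \<open>w \<in> S\<close> assms(1) by (intro triangle) auto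
    also have "\<dots> < e"
      using pick[OF \<open>c \<in> F'\<close>] c commute[of c "pick c"] by simp
    finally show "w \<in> (\<Union>x\<in>pick ` F'. mball x e)"
      using \<open>c \<in> F'\<close> \<open>w \<in> S\<close> assms(1) pick[OF \<open>c \<in> F'\<close>] by auto
  qed
  moreover have "finite (pick ` F')" "pick ` F' \<subseteq> S"
    using F(1) pick unfolding F'_def by auto
  ultimately show "\<exists>K. finite K \<and> K \<subseteq> S \<and> S \<subseteq> (\<Union>x\<in>K. mball x e)"
    by blast
qed

lemma pointed_GH_convE:
  assumes "pointed_GH_conv X d lam q Z dZ z" "0 < r" "0 < \<epsilon>" "eventually P sequentially"
  obtains n g where "P n" "g (q n) = z"
    and "\<And>a. a \<in> X \<Longrightarrow> d (q n) a / lam n < r \<Longrightarrow> g a \<in> Z"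
    and "\<And>a b. a \<in> X \<Longrightarrow> d (q n) a / lam n < r \<Longrightarrow> b \<in> X \<Longrightarrow> d (q n) b / lam n < r \<Longrightarrow>
           \<bar>dZ (g a) (g b) - d a b / lam n\<bar> < \<epsilon>"
    and "\<And>w. w \<in> Z \<Longrightarrow> dZ z w < r - \<epsilon> \<Longrightarrow> \<exists>a\<in>X. d (q n) a / lam n < r \<and> dZ w (g a) < \<epsilon>"
proof -
  have "eventually (\<lambda>n. P n \<and> (let B = {a \<in> X. d (q n) a / lam n < r} in
         \<exists>g. (\<forall>a\<in>B. g a \<in> Z) \<and> g (q n) = z \<and>
             (\<forall>a\<in>B. \<forall>b\<in>B. \<bar>dZ (g a) (g b) - d a b / lam n\<bar> < \<epsilon>) \<and>
             (\<forall>w\<in>Z. dZ z w < r - \<epsilon> \<longrightarrow> (\<exists>a\<in>B. dZ w (g a) < \<epsilon>)))) sequentially"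
    using assms unfolding pointed_GH_conv_def by (intro eventually_conj) auto
  then obtain n where "P n \<and> (let B = {a \<in> X. d (q n) a / lam n < r} in
         \<exists>g. (\<forall>a\<in>B. g a \<in> Z) \<and> g (q n) = z \<and>
             (\<forall>a\<in>B. \<forall>b\<in>B. \<bar>dZ (g a) (g b) - d a b / lam n\<bar> < \<epsilon>) \<and>
             (\<forall>w\<in>Z. dZ z w < r - \<epsilon> \<longrightarrow> (\<exists>a\<in>B. dZ w (g a) < \<epsilon>)))"
    unfolding eventually_sequentially by blast
  then obtain g where "P n" "g (q n) = z" "\<forall>a\<in>{a \<in> X. d (q n) a / lam n < r}. g a \<in> Z"
    "\<forall>a\<in>{a \<in> X. d (q n) a / lam n < r}. \<forall>b\<in>{a \<in> X. d (q n) a / lam n < r}.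
       \<bar>dZ (g a) (g b) - d a b / lam n\<bar> < \<epsilon>"
    "\<forall>w\<in>Z. dZ z w < r - \<epsilon> \<longrightarrow> (\<exists>a\<in>{a \<in> X. d (q n) a / lam n < r}. dZ w (g a) < \<epsilon>)"
    unfolding Let_def by blast
  then show ?thesis
    by (intro that[of n g]) auto
qed

lemma pointed_GH_conv_mtotally_bounded_mcball:
  assumes "Metric_space X d" "Metric_space.mtotally_bounded X d X" "Metric_space Z dZ"
    and GH: "pointed_GH_conv X d lam q Z dZ z" and lam: "\<And>n. 0 < lam n"
  shows "Metric_space.mtotally_bounded Z dZ (Metric_space.mcball Z dZ z r)"
proof -
  interpret X: Metric_space X d by fact
  interpret Z: Metric_space Z dZ by fact
  let ?R = "\<bar>r\<bar> + 1"
  show ?thesis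
  proof (rule Z.mtotally_boundedI_net[OF Z.mcball_subset_mspace])
    fix e :: real
    assume "0 < e"
    define e1 where "e1 = min (e / 3) (1 / 2)"
    have e1: "0 < e1" "e1 \<le> e / 3" "e1 \<le> 1 / 2"
      using \<open>0 < e\<close> unfolding e1_def by auto
    obtain n g where g: "\<And>a. a \<in> X \<Longrightarrow> d (q n) a / lam n < ?R \<Longrightarrow> g a \<in> Z"
      and g_dist: "\<And>a b. a \<in> X \<Longrightarrow> d (q n) a / lam n < ?R \<Longrightarrow> b \<in> X \<Longrightarrow> d (q n) b / lam n < ?R \<Longrightarrow>
           \<bar>dZ (g a) (g b) - d a b / lam n\<bar> < e1"
      and g_dense: "\<And>w. w \<in> Z \<Longrightarrow> dZ z w < ?R - e1 \<Longrightarrow> \<exists>a\<in>X. d (q n) a / lam n < ?R \<and> dZ w (g a) < e1"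
      by (rule pointed_GH_convE[OF GH _ e1(1) eventually_True]) auto
    define B where "B = {a \<in> X. d (q n) a / lam n < ?R}"
    have "X.mtotally_bounded B"
      using assms(2) unfolding B_def by (rule X.mtotally_bounded_subset) auto
    moreover have "0 < lam n * (e / 3)"
      using lam \<open>0 < e\<close> by simp
    ultimately obtain T where T: "finite T" "T \<subseteq> B" "B \<subseteq> (\<Union>t\<in>T. X.mball t (lam n * (e / 3)))"
      unfolding X.mtotally_bounded_def by meson
    have "w \<in> (\<Union>c\<in>g ` T. Z.mball c e)" if "w \<in> Z.mcball z r" for w
    proof -
      have "w \<in> Z" "dZ z w < ?R - e1"
        using that e1 by auto
      then obtain a where a: "a \<in> B" "dZ w (g a) < e1"
        using g_dense unfolding B_def by blast
      then obtain t where t: "t \<in> T" "d t a < lam n * (e / 3)"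
        using T(3) by auto
      have "t \<in> B"
        using t T(2) by auto
      have "d t a / lam n < e / 3"
        using t(2) lam[of n] by (simp add: divide_less_eq mult.commute)
      moreover have "\<bar>dZ (g t) (g a) - d t a / lam n\<bar> < e1"
        using g_dist \<open>t \<in> B\<close> a(1) unfolding B_def by blast
      moreover have "dZ (g t) w \<le> dZ (g t) (g a) + dZ w (g a)"
        using g \<open>t \<in> B\<close> a(1) \<open>w \<in> Z\<close> unfolding B_def by (intro Z.triangle') auto
      ultimately have "dZ (g t) w < e"
        using a(2) e1 by linarith
      moreover have "g t \<in> Z"
        using g \<open>t \<in> B\<close> unfolding B_def by blast
      ultimately show ?thesis
        using t(1) \<open>w \<in> Z\<close> by auto
    qed
    moreover have "g ` T \<subseteq> Z"
      using T(2) g unfolding B_def by auto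
    ultimately show "\<exists>F. finite F \<and> F \<subseteq> Z \<and> Z.mcball z r \<subseteq> (\<Union>c\<in>F. Z.mball c e)"
      using T(1) by (intro exI[of _ "g ` T"]) blast
  qed
qed

lemma pointed_GH_conv_compactin_mcball:
  assumes "Metric_space X d" "Metric_space.mtotally_bounded X d X"
    and "Metric_space Z dZ" "Metric_space.mcomplete Z dZ"
    and GH: "pointed_GH_conv X d lam q Z dZ z" and lam: "\<And>n. 0 < lam n"
  shows "compactin (Metric_space.mtopology Z dZ) (Metric_space.mcball Z dZ z r)"
proof -
  interpret Z: Metric_space Z dZ by fact
  show ?thesis
    using pointed_GH_conv_mtotally_bounded_mcball[OF assms(1-3) GH lam]
      Z.mtotally_bounded_eq_compact_closure_of[OF assms(4)] closure_of_closedin[OF Z.closedin_mcball]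
    by simp
qed

lemma pointed_GH_approximation_comp:
  assumes "Metric_space X d" "Metric_space Z dZ" "z \<in> Z" "0 < l" "\<epsilon> \<le> 1" "q \<in> X"
    and G: "\<And>a. a \<in> X \<Longrightarrow> d q a / l < 3 \<Longrightarrow> G a \<in> Z" "G q = z"
    and G_dist: "\<And>a b. a \<in> X \<Longrightarrow> d q a / l < 3 \<Longrightarrow> b \<in> X \<Longrightarrow> d q b / l < 3 \<Longrightarrow>
                   \<bar>dZ (G a) (G b) - d a b / l\<bar> < \<epsilon>"
    and h: "h ` X \<subseteq> Metric_space.mball X d x1 l" "d q x1 < l"
  shows "\<And>x. x \<in> X \<Longrightarrow> G (h x) \<in> Metric_space.mcball Z dZ z 3"
    and "\<And>x y. x \<in> X \<Longrightarrow> y \<in> X \<Longrightarrow> \<bar>dZ (G (h x)) (G (h y)) - d (h x) (h y) / l\<bar> < \<epsilon>"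
proof -
  interpret Metric_space X d by fact
  have near: "h x \<in> X \<and> d q (h x) / l < 2" if "x \<in> X" for x
  proof -
    have "h x \<in> X" "d x1 (h x) < l" "x1 \<in> X"
      using h(1) that by auto
    moreover have "d q (h x) \<le> d q x1 + d x1 (h x)"
      using \<open>q \<in> X\<close> calculation by (intro triangle) auto
    ultimately show ?thesis
      using h(2) \<open>0 < l\<close> by (simp add: divide_less_eq)
  qed
  show "\<bar>dZ (G (h x)) (G (h y)) - d (h x) (h y) / l\<bar> < \<epsilon>" if "x \<in> X" "y \<in> X" for x y
    using G_dist near[OF that(1)] near[OF that(2)] by simp
  show "G (h x) \<in> Metric_space.mcball Z dZ z 3" if "x \<in> X" for x
  proof -
    have "\<bar>dZ z (G (h x)) - d q (h x) / l\<bar> < \<epsilon>"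
      using G_dist[OF \<open>q \<in> X\<close> _ conjunct1[OF near[OF that]]] G(2) near[OF that] \<open>q \<in> X\<close> \<open>0 < l\<close>
      by simp
    then have "dZ z (G (h x)) \<le> 3"
      using near[OF that] \<open>\<epsilon> \<le> 1\<close> by linarith
    moreover have "G (h x) \<in> Z"
      using G near[OF that] by simp
    ultimately show ?thesis
      using \<open>z \<in> Z\<close> Metric_space.in_mcball[OF assms(2)] by simp
  qed
qed

section \<open>Embeddings into weak tangents\<close>

lemma unif_comp_self_qsE:
  assumes "unif_comp_self_qs X d eta D"
  obtains r0 C where "0 < r0" "0 < C"
    and "\<And>x r. x \<in> D \<Longrightarrow> 0 < r \<Longrightarrow> r < r0 \<Longrightarrow>
       \<exists>U f. U \<subseteq> Metric_space.mball X d x r \<and> x \<in> U \<and> r / C \<le> mdiam d U \<and>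
             quasisymmetric_on X d X d eta U f \<and> f ` U = X"
proof -
  obtain r0 C where "0 < r0" "0 < C" and pieces: "\<forall>x\<in>D. \<forall>r. 0 < r \<and> r < r0 \<longrightarrow>
      (\<exists>U. U \<subseteq> Metric_space.mball X d x r \<and> x \<in> U \<and> r / C \<le> mdiam d U \<and> mdiam d U \<le> C * r \<and>
           (\<exists>f. quasisymmetric_on X d X d eta U f \<and> f ` U = X))"
    using assms unfolding unif_comp_self_qs_def by (elim exE conjE)
  have "\<exists>U f. U \<subseteq> Metric_space.mball X d x r \<and> x \<in> U \<and> r / C \<le> mdiam d U \<and>
      quasisymmetric_on X d X d eta U f \<and> f ` U = X" if "x \<in> D" "0 < r" "r < r0" for x r
  proof -
    from pieces that have "\<exists>U. U \<subseteq> Metric_space.mball X d x r \<and> x \<in> U \<and> r / C \<le> mdiam d U \<and>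
        mdiam d U \<le> C * r \<and> (\<exists>f. quasisymmetric_on X d X d eta U f \<and> f ` U = X)"
      by simp
    then show ?thesis
      by (elim exE conjE) (intro exI conjI)
  qed
  with \<open>0 < r0\<close> \<open>0 < C\<close> show ?thesis
    by (rule that)
qed

lemma proper_mspace_compact_space_if_quasisymmetric_onto:
  assumes "Metric_space X d" "proper_mspace X d" "distortion_fn eta"
    and f: "quasisymmetric_on X d X d eta U f" "f ` U = X" and "Metric_space.mbounded X d U"
  shows "compact_space (Metric_space.mtopology X d)"
proof -
  interpret Metric_space X d by fact
  have "mbounded X"
    using quasisymmetric_on_mbounded_image[OF assms(1,1,3) f(1) assms(6)] f(2) by simp
  then obtain x B where "X \<subseteq> mcball x B"
    unfolding mbounded_def by blast
  then have "mcball x B = topspace mtopology"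
    using mcball_subset_mspace by auto
  then show ?thesis
    using assms(2) unfolding proper_mspace_def compact_space_def by metis
qed

lemma less_mdiamE:
  assumes "a < mdiam d S" "S \<noteq> {}"
  obtains u v where "u \<in> S" "v \<in> S" "a < d u v"
proof -
  have "\<not> (\<forall>u\<in>S. \<forall>v\<in>S. d u v \<le> a)"
  proof
    assume "\<forall>u\<in>S. \<forall>v\<in>S. d u v \<le> a"
    then have "mdiam d S \<le> a"
      unfolding mdiam_def using assms(2) by (intro cSup_least) blast+
    with assms(1) show False
      by simp
  qed
  then show ?thesis
    using that by (auto simp: not_le)
qed

lemma self_quasisymmetric_piece_inverse:
  assumes "Metric_space X d" "distortion_fn eta"
    and U: "U \<subseteq> Metric_space.mball X d x r" "x \<in> U" "r / C \<le> mdiam d U" "0 < r" "0 < C"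
    and f: "quasisymmetric_on X d X d eta U f" "f ` U = X"
  obtains h where "quasisymmetric_on X d X d (dual_distortion eta) X h"
    and "h ` X \<subseteq> Metric_space.mball X d x r"
    and "\<exists>u\<in>X. \<exists>v\<in>X. r / (2 * C) < d (h u) (h v)"
proof -
  have qs: "quasisymmetric_on X d X d (dual_distortion eta) X (inv_into U f)"
    using quasisymmetric_on_inv_into[OF assms(1,1,2) f(1)] f(2) by simp
  have inj: "inj_on f U"
    using assms(1) f(1) by (rule quasisymmetric_on_inj_on)
  have "inv_into U f ` X = U"
    using inv_into_image_cancel[OF inj] f(2) by blast
  moreover have "r / (2 * C) < mdiam d U"
    using U(3-5) by (smt (verit, ccfv_SIG) divide_strict_left_mono field_sum_of_halves mult_pos_pos)
  then obtain u v where "u \<in> U" "v \<in> U" "r / (2 * C) < d u v"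
    using U(2) by (auto elim: less_mdiamE)
  then have "r / (2 * C) < d (inv_into U f (f u)) (inv_into U f (f v))" "f u \<in> X" "f v \<in> X"
    using inj f(2) by auto
  ultimately show ?thesis
    using that qs U(1) by blast
qed

lemma quasisymmetric_on_rescaled_bounds:
  assumes MX: "Metric_space X d" and MY: "Metric_space Y dY" and eta: "distortion_fn eta"
    and h: "quasisymmetric_on X d Y dY eta X h"
    and diam: "\<And>a b. a \<in> X \<Longrightarrow> b \<in> X \<Longrightarrow> d a b \<le> D"
    and "0 < l" and spread: "u \<in> X" "v \<in> X" "\<delta> * l \<le> dY (h u) (h v)"
    and xyw: "x \<in> X" "y \<in> X" "w \<in> X" "x \<noteq> w"
  shows "dY (h x) (h y) / l \<le> eta (d x y / d x w) * (dY (h x) (h w) / l)"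
    and "\<delta> / 2 / eta (D / d x w) \<le> dY (h x) (h w) / l"
proof -
  show "dY (h x) (h y) / l \<le> eta (d x y / d x w) * (dY (h x) (h w) / l)"
    using quasisymmetric_on_le_mult[OF MX MY h xyw] \<open>0 < l\<close> by (simp add: divide_right_mono)
  have "0 < d x w"
    using xyw MX by (simp add: Metric_space.mdist_pos_eq)
  then have "0 < eta (D / d x w)"
    using diam[OF xyw(1,3)] by (intro distortion_fn_pos[OF eta]) simp
  have "dY (h u) (h v) / 2 \<le> eta (D / d x w) * dY (h x) (h w)"
    using spread xyw by (intro quasisymmetric_on_lower_bound[OF MX MY eta h diam]) auto
  with spread(3) have "\<delta> * l / 2 \<le> eta (D / d x w) * dY (h x) (h w)"
    by linarith
  then show "\<delta> / 2 / eta (D / d x w) \<le> dY (h x) (h w) / l"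
    using \<open>0 < eta (D / d x w)\<close> \<open>0 < l\<close> by (simp add: field_simps)
qed

lemma quasisymmetric_limit_of_rescaled_embeddings:
  fixes \<Psi> :: "nat \<Rightarrow> 'a \<Rightarrow> 'b" and h :: "nat \<Rightarrow> 'a \<Rightarrow> 'c"
  assumes MX: "Metric_space X d" and MY: "Metric_space Y dY" and MZ: "Metric_space Z dZ"
    and eta: "distortion_fn eta"
    and compact: "compact_space (Metric_space.mtopology X d)"
    and K: "compactin (Metric_space.mtopology Z dZ) K"
    and h: "\<And>k. quasisymmetric_on X d Y dY eta X (h k)"
    and l: "\<And>k. 0 < l k"
    and spread: "\<And>k. \<exists>u\<in>X. \<exists>v\<in>X. \<delta> * l k \<le> dY (h k u) (h k v)" and "0 < \<delta>"
    and into: "\<And>k x. x \<in> X \<Longrightarrow> \<Psi> k x \<in> K"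
    and approx: "\<And>k x y. x \<in> X \<Longrightarrow> y \<in> X \<Longrightarrow>
                   \<bar>dZ (\<Psi> k x) (\<Psi> k y) - dY (h k x) (h k y) / l k\<bar> < 1 / (real k + 1)"
  shows "\<exists>\<phi>. quasisymmetric_on X d Z dZ eta X \<phi>"
proof -
  interpret X: Metric_space X d by fact
  interpret Z: Metric_space Z dZ by fact
  have "X.mbounded X"
    using X.compactin_imp_mbounded compact unfolding compact_space_def by simp
  then obtain D where diam: "\<And>a b. a \<in> X \<Longrightarrow> b \<in> X \<Longrightarrow> d a b \<le> D"
    unfolding X.mbounded_alt by blast
  obtain \<phi> where \<phi>_K: "\<And>x. x \<in> X \<Longrightarrow> \<phi> x \<in> K"
    and close: "\<And>x y w e. x \<in> X \<Longrightarrow> y \<in> X \<Longrightarrow> w \<in> X \<Longrightarrow> 0 < e \<Longrightarrow>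
       \<exists>k. \<bar>dZ (\<phi> x) (\<phi> y) - dY (h k x) (h k y) / l k\<bar> < e \<and>
           \<bar>dZ (\<phi> x) (\<phi> w) - dY (h k x) (h k w) / l k\<bar> < e"
    using compactin_approximate_distances_limit[where \<rho> = "\<lambda>k x y. dY (h k x) (h k y) / l k",
        OF MZ K into approx] by blast
  have eta_pos: "0 < eta (D / d x w)" if "x \<in> X" "w \<in> X" "x \<noteq> w" for x w
  proof -
    have "0 < d x w"
      using that by simp
    then show ?thesis
      using diam[OF that(1,2)] by (intro distortion_fn_pos[OF eta]) simp
  qed
  have bounds: "dZ (\<phi> x) (\<phi> y) \<le> eta (d x y / d x w) * dZ (\<phi> x) (\<phi> w) \<and>
                \<delta> / 2 / eta (D / d x w) \<le> dZ (\<phi> x) (\<phi> w)"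
    if xyw: "x \<in> X" "y \<in> X" "w \<in> X" "x \<noteq> w" for x y w
  proof (rule approachable_ratio_bounds)
    fix e :: real
    assume "0 < e"
    then obtain k where k: "\<bar>dZ (\<phi> x) (\<phi> y) - dY (h k x) (h k y) / l k\<bar> < e"
      "\<bar>dZ (\<phi> x) (\<phi> w) - dY (h k x) (h k w) / l k\<bar> < e"
      using close xyw by blast
    obtain u v where "u \<in> X" "v \<in> X" "\<delta> * l k \<le> dY (h k u) (h k v)"
      using spread by blast
    note bounds = quasisymmetric_on_rescaled_bounds[OF MX MY eta h diam l this xyw]
    show "\<exists>a b. a \<le> eta (d x y / d x w) * b \<and> \<delta> / 2 / eta (D / d x w) \<le> b \<and>
        \<bar>dZ (\<phi> x) (\<phi> y) - a\<bar> < e \<and> \<bar>dZ (\<phi> x) (\<phi> w) - b\<bar> < e"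
      using k bounds by (intro exI[of _ "dY (h k x) (h k y) / l k"] exI[of _ "dY (h k x) (h k w) / l k"]) simp
  qed
  have "K \<subseteq> Z"
    using compactin_subset_topspace[OF K] by simp
  have "quasisymmetric_on X d Z dZ eta X \<phi>"
  proof (rule compact_quasisymmetric_onI[OF MX MZ eta compact])
    show "\<phi> ` X \<subseteq> Z"
      using \<phi>_K \<open>K \<subseteq> Z\<close> by auto
    show "\<phi> x \<noteq> \<phi> w" if "x \<in> X" "w \<in> X" "x \<noteq> w" for x w
    proof -
      have "0 < \<delta> / 2 / eta (D / d x w)"
        using eta_pos[OF that] \<open>0 < \<delta>\<close> by simp
      moreover have "\<phi> w \<in> Z"
        using \<phi>_K that(2) \<open>K \<subseteq> Z\<close> by auto
      ultimately show ?thesis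
        using bounds[OF that(1,1,2,3)] by auto
    qed
    show "dZ (\<phi> x) (\<phi> y) \<le> eta (d x y / d x w) * dZ (\<phi> x) (\<phi> w)"
      if "x \<in> X" "y \<in> X" "w \<in> X" "x \<noteq> w" for x y w
      using bounds[OF that] by simp
  qed
  then show ?thesis
    by blast
qed

lemma weak_tangent_rescaled_embedding:
  assumes "Metric_space X d" "distortion_fn eta"
    and V: "openin (Metric_space.mtopology X d) V" "p \<in> V"
      "V \<subseteq> Metric_space.mtopology X d closure_of D"
    and pieces: "\<And>x r. x \<in> D \<Longrightarrow> 0 < r \<Longrightarrow> r < r0 \<Longrightarrow>
       \<exists>U f. U \<subseteq> Metric_space.mball X d x r \<and> x \<in> U \<and> r / C \<le> mdiam d U \<and>
             quasisymmetric_on X d X d eta U f \<and> f ` U = X"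
    and "0 < r0" "0 < C"
    and lam: "\<And>n. 0 < lam n" "lam \<longlonglongrightarrow> 0"
    and q: "\<And>n. q n \<in> X" "(\<lambda>n. d (q n) p) \<longlonglongrightarrow> 0"
    and GH: "pointed_GH_conv X d lam q Z dZ z" and Z: "Metric_space Z dZ" "z \<in> Z"
    and "0 < \<epsilon>" "\<epsilon> \<le> 1"
  obtains l h \<psi> where "0 < l" "quasisymmetric_on X d X d (dual_distortion eta) X h"
    and "\<exists>u\<in>X. \<exists>v\<in>X. 1 / (2 * C) * l \<le> d (h u) (h v)"
    and "\<And>x. x \<in> X \<Longrightarrow> \<psi> x \<in> Metric_space.mcball Z dZ z 3"
    and "\<And>x y. x \<in> X \<Longrightarrow> y \<in> X \<Longrightarrow> \<bar>dZ (\<psi> x) (\<psi> y) - d (h x) (h y) / l\<bar> < \<epsilon>"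
proof -
  interpret Metric_space X d by fact
  have "limitin mtopology q p sequentially"
    unfolding limitin_metric using V(2) openin_subset[OF V(1)] q order_tendstoD(2)[OF q(2)] by auto
  then have "eventually (\<lambda>n. q n \<in> V) sequentially"
    using V(1,2) unfolding limitin_def by blast
  moreover have "eventually (\<lambda>n. lam n < r0) sequentially"
    using order_tendstoD(2)[OF lam(2) \<open>0 < r0\<close>] .
  ultimately have ev: "eventually (\<lambda>n. q n \<in> V \<and> lam n < r0) sequentially"
    by (rule eventually_conj)
  obtain n G where n: "q n \<in> V" "lam n < r0" and G: "G (q n) = z"
    "\<And>a. a \<in> X \<Longrightarrow> d (q n) a / lam n < 3 \<Longrightarrow> G a \<in> Z"
    and G_dist: "\<And>a b. a \<in> X \<Longrightarrow> d (q n) a / lam n < 3 \<Longrightarrow> b \<in> X \<Longrightarrow> d (q n) b / lam n < 3 \<Longrightarrow>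
           \<bar>dZ (G a) (G b) - d a b / lam n\<bar> < \<epsilon>"
    by (rule pointed_GH_convE[OF GH _ \<open>0 < \<epsilon>\<close> ev]) auto
  obtain x1 where "x1 \<in> D" "d (q n) x1 < lam n"
    using n(1) V(3) lam(1)[of n] unfolding metric_closure_of by fastforce
  then obtain U f where "U \<subseteq> mball x1 (lam n)" "x1 \<in> U" "lam n / C \<le> mdiam d U"
    and f: "quasisymmetric_on X d X d eta U f" "f ` U = X"
    using pieces[of x1 "lam n"] lam(1)[of n] n(2) by blast
  then obtain h where h: "quasisymmetric_on X d X d (dual_distortion eta) X h"
    and "h ` X \<subseteq> mball x1 (lam n)" and spread: "\<exists>u\<in>X. \<exists>v\<in>X. lam n / (2 * C) < d (h u) (h v)"
    using self_quasisymmetric_piece_inverse[OF assms(1,2)] lam(1)[of n] \<open>0 < C\<close> by metis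
  note comp = pointed_GH_approximation_comp[where G = G and h = h and l = "lam n" and q = "q n",
      OF assms(1) Z lam(1) \<open>\<epsilon> \<le> 1\<close> q(1) G(2,1) G_dist
      \<open>h ` X \<subseteq> mball x1 (lam n)\<close> \<open>d (q n) x1 < lam n\<close>]
  show ?thesis
  proof (rule that[OF lam(1) h _ comp])
    show "\<exists>u\<in>X. \<exists>v\<in>X. 1 / (2 * C) * lam n \<le> d (h u) (h v)"
      using spread by (auto intro: less_imp_le)
  qed
qed

lemma weak_tangent_quasisymmetric_embedding:
  assumes "Metric_space X d" "distortion_fn eta" and compact: "compact_space (Metric_space.mtopology X d)"
    and V: "openin (Metric_space.mtopology X d) V" "p \<in> V"
      "V \<subseteq> Metric_space.mtopology X d closure_of D"
    and pieces: "\<And>x r. x \<in> D \<Longrightarrow> 0 < r \<Longrightarrow> r < r0 \<Longrightarrow>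
       \<exists>U f. U \<subseteq> Metric_space.mball X d x r \<and> x \<in> U \<and> r / C \<le> mdiam d U \<and>
             quasisymmetric_on X d X d eta U f \<and> f ` U = X"
    and "0 < r0" "0 < C" and tangent: "weak_tangent X d p Z dZ z"
  shows "\<exists>f. quasisymmetric_on X d Z dZ (dual_distortion eta) X f"
proof -
  interpret Metric_space X d by fact
  obtain lam q where lam: "\<And>n. 0 < lam n" "lam \<longlonglongrightarrow> 0"
    and q: "\<And>n. q n \<in> X" "(\<lambda>n. d (q n) p) \<longlonglongrightarrow> 0"
    and GH: "pointed_GH_conv X d lam q Z dZ z"
    and Z: "Metric_space Z dZ" "Metric_space.mcomplete Z dZ" "z \<in> Z"
    using tangent unfolding weak_tangent_def by blast
  have "mtotally_bounded X"
    using compact compactin_imp_mtotally_bounded unfolding compact_space_def by simp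
  then have K: "compactin (Metric_space.mtopology Z dZ) (Metric_space.mcball Z dZ z 3)"
    by (rule pointed_GH_conv_compactin_mcball[OF assms(1) _ Z(1,2) GH lam(1)])
  have "\<exists>l h \<psi>. 0 < l \<and> quasisymmetric_on X d X d (dual_distortion eta) X h \<and>
          (\<exists>u\<in>X. \<exists>v\<in>X. 1 / (2 * C) * l \<le> d (h u) (h v)) \<and>
          (\<forall>x\<in>X. \<psi> x \<in> Metric_space.mcball Z dZ z 3) \<and>
          (\<forall>x\<in>X. \<forall>y\<in>X. \<bar>dZ (\<psi> x) (\<psi> y) - d (h x) (h y) / l\<bar> < 1 / (real k + 1))" for k
  proof -
    have \<epsilon>: "0 < 1 / (real k + 1)" "1 / (real k + 1) \<le> 1"
      by simp_all
    obtain l h \<psi> where "0 < l" "quasisymmetric_on X d X d (dual_distortion eta) X h"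
      "\<exists>u\<in>X. \<exists>v\<in>X. 1 / (2 * C) * l \<le> d (h u) (h v)"
      "\<And>x. x \<in> X \<Longrightarrow> \<psi> x \<in> Metric_space.mcball Z dZ z 3"
      "\<And>x y. x \<in> X \<Longrightarrow> y \<in> X \<Longrightarrow> \<bar>dZ (\<psi> x) (\<psi> y) - d (h x) (h y) / l\<bar> < 1 / (real k + 1)"
      by (rule weak_tangent_rescaled_embedding[OF assms(1,2) V pieces \<open>0 < r0\<close> \<open>0 < C\<close> lam q GH Z(1,3) \<epsilon>]) blast+
    then show ?thesis
      by blast
  qed
  then obtain l h \<Psi> where l: "\<And>k. 0 < l k"
    and h: "\<And>k. quasisymmetric_on X d X d (dual_distortion eta) X (h k)"
    and spread: "\<And>k. \<exists>u\<in>X. \<exists>v\<in>X. 1 / (2 * C) * l k \<le> d (h k u) (h k v)"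
    and into: "\<And>k x. x \<in> X \<Longrightarrow> \<Psi> k x \<in> Metric_space.mcball Z dZ z 3"
    and approx: "\<And>k x y. x \<in> X \<Longrightarrow> y \<in> X \<Longrightarrow>
                   \<bar>dZ (\<Psi> k x) (\<Psi> k y) - d (h k x) (h k y) / l k\<bar> < 1 / (real k + 1)"
    by metis
  show ?thesis
    by (rule quasisymmetric_limit_of_rescaled_embeddings[where \<Psi> = \<Psi> and h = h and l = l,
          OF assms(1,1) Z(1) distortion_fn_dual_distortion[OF assms(2)] compact K h l spread _ into approx])
      (use \<open>0 < C\<close> in simp)
qed

theorem corollary5p1:
  fixes X :: "'a set" and d :: "'a \<Rightarrow> 'a \<Rightarrow> real" and p :: 'a
    and eta :: "real \<Rightarrow> real"
    and Z :: "'b set" and dZ :: "'b \<Rightarrow> 'b \<Rightarrow> real" and z :: 'b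
  assumes "Metric_space X d"
    and "proper_mspace X d"
    and "doubling_mspace X d"
    and "p \<in> X"
    and "distortion_fn eta"
    and "\<exists>V D. openin (Metric_space.mtopology X d) V \<and> p \<in> V \<and> D \<subseteq> V \<and>
               V \<subseteq> (Metric_space.mtopology X d) closure_of D \<and>
               unif_comp_self_qs X d eta D"
    and "weak_tangent X d p Z dZ z"
  shows "\<exists>f. quasisymmetric_on X d Z dZ (dual_distortion eta) X f"
proof -
  interpret Metric_space X d by fact
  obtain V D where V: "openin mtopology V" "p \<in> V" "V \<subseteq> mtopology closure_of D"
    and uniform: "unif_comp_self_qs X d eta D"
    using assms(6) by blast
  obtain r0 C where "0 < r0" "0 < C"
    and pieces: "\<And>x r. x \<in> D \<Longrightarrow> 0 < r \<Longrightarrow> r < r0 \<Longrightarrow>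
       \<exists>U f. U \<subseteq> mball x r \<and> x \<in> U \<and> r / C \<le> mdiam d U \<and>
             quasisymmetric_on X d X d eta U f \<and> f ` U = X"
    by (rule unif_comp_self_qsE[OF uniform]) blast
  obtain x where "x \<in> D"
    using V(2,3) by fastforce
  then obtain U f where U: "U \<subseteq> mball x (r0 / 2)"
    and f: "quasisymmetric_on X d X d eta U f" "f ` U = X"
    using pieces[of x "r0 / 2"] \<open>0 < r0\<close> by auto
  from U have "mbounded U"
    by (meson mbounded_mball mbounded_subset)
  then have "compact_space mtopology"
    by (rule proper_mspace_compact_space_if_quasisymmetric_onto[OF assms(1,2,5) f])
  from weak_tangent_quasisymmetric_embedding[OF assms(1,5) this V pieces \<open>0 < r0\<close> \<open>0 < C\<close> assms(7)]
  show ?thesis .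
qed

end
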